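(* Suppose that for every connected graph $G$, the number of pairwise non-isomorphic connected graphs equimorphic to $G$ is either $1$ or infinite. Then for every graph $G$, the number of pairwise non-isomorphic graphs equimorphic to $G$ is either $1$ or infinite.
   Context: Graphs are undirected and loopless. $G$ embeds into $G'$ if $G$ is isomorphic to an induced subgraph of $G'$; $G,G'$ are equimorphic if each embeds into the other. *)

theory Defs
  imports Main
begin

type_synonym 'a graph = "'a set \<times> ('a \<Rightarrow> 'a \<Rightarrow> bool)"

definition verts :: "'a graph \<Rightarrow> 'a set" where "verts G = fst G"
definition adj :: "'a graph \<Rightarrow> 'a \<Rightarrow> 'a \<Rightarrow> bool" where "adj G = snd G"

definition is_graph :: "'a graph \<Rightarrow> bool" where
  "is_graph G \<longleftrightarrow>
     (\<forall>x y. adj G x y \<longrightarrow> x \<in> verts G \<and> y \<in> verts G) \<and>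
     (\<forall>x y. adj G x y \<longrightarrow> adj G y x) \<and>
     (\<forall>x. \<not> adj G x x)"

text \<open>G embeds into H: G is isomorphic to an induced subgraph of H.\<close>
definition embeds :: "'a graph \<Rightarrow> 'b graph \<Rightarrow> bool" where
  "embeds G H \<longleftrightarrow> (\<exists>f. inj_on f (verts G) \<and> f ` verts G \<subseteq> verts H \<and>
     (\<forall>x\<in>verts G. \<forall>y\<in>verts G. adj G x y \<longleftrightarrow> adj H (f x) (f y)))"

definition equimorphic :: "'a graph \<Rightarrow> 'b graph \<Rightarrow> bool" where
  "equimorphic G H \<longleftrightarrow> embeds G H \<and> embeds H G"

definition isomorphic :: "'a graph \<Rightarrow> 'b graph \<Rightarrow> bool" where
  "isomorphic G H \<longleftrightarrow> (\<exists>f. bij_betw f (verts G) (verts H) \<and>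
     (\<forall>x\<in>verts G. \<forall>y\<in>verts G. adj G x y \<longleftrightarrow> adj H (f x) (f y)))"

definition connected_graph :: "'a graph \<Rightarrow> bool" where
  "connected_graph G \<longleftrightarrow> verts G \<noteq> {} \<and>
     (\<forall>x\<in>verts G. \<forall>y\<in>verts G. (adj G)\<^sup>*\<^sup>* x y)"

definition iso_classes :: "('a graph \<Rightarrow> bool) \<Rightarrow> 'a graph set set" where
  "iso_classes P = {H. is_graph H \<and> P H} // {(H, H'). isomorphic H H'}"

definition one_or_infinite :: "'a graph set set \<Rightarrow> bool" where
  "one_or_infinite C \<longleftrightarrow> card C = 1 \<or> infinite C"

end

theory Submission
  imports Defs
begin

text \<open>
  Equimorphic finite graphs are isomorphic, and complementation preserves embeddings and
  isomorphisms while turning an infinite disconnected graph into a connected one; so it suffices to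
  treat an infinite connected graph \<open>G\<close>. If every graph equimorphic to \<open>G\<close> is connected, the
  hypothesis applies verbatim. Otherwise take a disconnected \<open>H\<close> with embeddings
  \<open>\<psi> : G \<rightarrow> H\<close> and \<open>\<chi> : H \<rightarrow> G\<close>. Then \<open>\<phi> = \<psi> \<circ> \<chi>\<close> is a self-embedding of \<open>H\<close> with image inside
  the connected copy \<open>D = \<psi>(G)\<close>, and some vertex \<open>v\<close> of \<open>H\<close> lies in a component avoiding \<open>D\<close>.
  The subgraph of \<open>H\<close> induced on \<open>\<phi>\<^sup>k(D) \<union> {v, \<phi> v, \<dots>, \<phi>\<^bsup>k-1\<^esup> v}\<close> contains a copy of \<open>G\<close> and
  embeds into \<open>G\<close>; since \<open>G\<close> has no isolated vertices, its isolated vertices are exactly the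
  \<open>k\<close> orbit points. These graphs are therefore pairwise non-isomorphic.
\<close>

section \<open>Embeddings and isomorphisms\<close>

lemma verts_pair [simp]: "verts (V, E) = V"
  by (simp add: verts_def)

lemma adj_pair [simp]: "adj (V, E) = E"
  by (simp add: adj_def)

lemma graph_eqI: "verts G = verts H \<Longrightarrow> adj G = adj H \<Longrightarrow> G = H"
  by (simp add: verts_def adj_def prod_eq_iff)

lemma is_graph_adjD:
  assumes "is_graph G" "adj G x y"
  shows "x \<in> verts G" "y \<in> verts G" "adj G y x" "x \<noteq> y"
  using assms unfolding is_graph_def by metis+

lemma is_graph_symp_reachable:
  assumes "is_graph G"
  shows "symp (adj G)\<^sup>*\<^sup>*"
  using assms by (intro symp_rtranclp) (auto intro: sympI dest: is_graph_adjD(3))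

definition embedding :: "'a graph \<Rightarrow> 'b graph \<Rightarrow> ('a \<Rightarrow> 'b) \<Rightarrow> bool" where
  "embedding G H f \<longleftrightarrow> inj_on f (verts G) \<and> f ` verts G \<subseteq> verts H \<and>
     (\<forall>x\<in>verts G. \<forall>y\<in>verts G. adj G x y \<longleftrightarrow> adj H (f x) (f y))"

lemma embeds_iff_embedding: "embeds G H \<longleftrightarrow> (\<exists>f. embedding G H f)"
  by (simp add: embeds_def embedding_def)

lemma isomorphic_iff_embedding:
  "isomorphic G H \<longleftrightarrow> (\<exists>f. embedding G H f \<and> f ` verts G = verts H)"
  by (auto simp: isomorphic_def embedding_def bij_betw_def)

lemma embedding_in_verts: "embedding G H f \<Longrightarrow> x \<in> verts G \<Longrightarrow> f x \<in> verts H"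
  by (auto simp: embedding_def)

lemma embedding_eq_iff:
  "embedding G H f \<Longrightarrow> x \<in> verts G \<Longrightarrow> y \<in> verts G \<Longrightarrow> f x = f y \<longleftrightarrow> x = y"
  by (auto simp: embedding_def inj_on_eq_iff)

lemma embedding_adj_iff:
  "embedding G H f \<Longrightarrow> x \<in> verts G \<Longrightarrow> y \<in> verts G \<Longrightarrow> adj H (f x) (f y) \<longleftrightarrow> adj G x y"
  by (auto simp: embedding_def)

lemma embedding_id: "embedding G G id"
  by (simp add: embedding_def)

lemma embedding_comp:
  assumes "embedding G H f" "embedding H K g"
  shows "embedding G K (g \<circ> f)"
  using assms by (auto simp: embedding_def comp_inj_on inj_on_subset image_subset_iff)

lemma embedding_funpow:
  assumes "embedding G G f"
  shows "embedding G G (f ^^ n)"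
proof (induction n)
  case 0
  then show ?case by (simp add: embedding_def)
next
  case (Suc n)
  show ?case
    unfolding funpow.simps by (rule embedding_comp[OF Suc.IH assms])
qed

lemma embeds_refl: "embeds G G"
  using embedding_id embeds_iff_embedding by blast

lemma equimorphic_refl: "equimorphic G G"
  by (simp add: equimorphic_def embeds_refl)

lemma isomorphic_refl: "isomorphic G G"
  unfolding isomorphic_iff_embedding by (intro exI[of _ id]) (simp add: embedding_id)

lemma isomorphic_sym:
  assumes "isomorphic G H"
  shows "isomorphic H G"
proof -
  obtain f where f: "embedding G H f" "f ` verts G = verts H"
    using assms unfolding isomorphic_iff_embedding by blast
  define g where "g = inv_into (verts G) f"
  have bij: "bij_betw g (verts H) (verts G)"
    unfolding g_def using f by (intro bij_betw_inv_into) (simp add: bij_betw_def embedding_def)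
  have "adj H x y \<longleftrightarrow> adj G (g x) (g y)" if "x \<in> verts H" "y \<in> verts H" for x y
  proof -
    have "g x \<in> verts G" "g y \<in> verts G" "f (g x) = x" "f (g y) = y"
      using that f(2) bij unfolding g_def by (auto intro: bij_betw_apply f_inv_into_f)
    then show ?thesis
      using embedding_adj_iff[OF f(1)] by metis
  qed
  then show ?thesis
    using bij unfolding isomorphic_def by blast
qed

lemma isomorphic_trans:
  assumes "isomorphic G H" "isomorphic H K"
  shows "isomorphic G K"
proof -
  obtain f g where "embedding G H f" "f ` verts G = verts H" "embedding H K g" "g ` verts H = verts K"
    using assms unfolding isomorphic_iff_embedding by blast
  then have "embedding G K (g \<circ> f)" "(g \<circ> f) ` verts G = verts K"
    by (auto simp only: embedding_comp image_comp[symmetric])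
  then show ?thesis
    unfolding isomorphic_iff_embedding by blast
qed

section \<open>Induced subgraphs, complements and connectivity\<close>

definition induced :: "'a graph \<Rightarrow> 'a set \<Rightarrow> 'a graph" where
  "induced G S = (S, \<lambda>x y. x \<in> S \<and> y \<in> S \<and> adj G x y)"

lemma verts_induced [simp]: "verts (induced G S) = S"
  by (simp add: induced_def)

lemma adj_induced [simp]: "adj (induced G S) x y \<longleftrightarrow> x \<in> S \<and> y \<in> S \<and> adj G x y"
  by (simp add: induced_def)

lemma is_graph_induced: "is_graph G \<Longrightarrow> is_graph (induced G S)"
  by (simp add: is_graph_def)

lemma embedding_induced: "S \<subseteq> verts G \<Longrightarrow> embedding (induced G S) G id"
  by (auto simp: embedding_def)

lemma embedding_into_induced:
  "embedding G H f \<Longrightarrow> f ` verts G \<subseteq> S \<Longrightarrow> embedding G (induced H S) f"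
  by (auto simp: embedding_def)

definition isolated_verts :: "'a graph \<Rightarrow> 'a set" where
  "isolated_verts G = {x \<in> verts G. \<forall>y\<in>verts G. \<not> adj G x y}"

lemma isomorphic_card_isolated_verts:
  assumes "isomorphic G H"
  shows "card (isolated_verts G) = card (isolated_verts H)"
proof -
  obtain f where f: "embedding G H f" "f ` verts G = verts H"
    using assms unfolding isomorphic_iff_embedding by blast
  have iff: "f x \<in> isolated_verts H \<longleftrightarrow> x \<in> isolated_verts G" if x: "x \<in> verts G" for x
    unfolding isolated_verts_def f(2)[symmetric] using x embedding_adj_iff[OF f(1) x] by auto
  have "isolated_verts G \<subseteq> verts G" "isolated_verts H \<subseteq> f ` verts G"
    using f(2) by (auto simp: isolated_verts_def)
  then have "f ` isolated_verts G = isolated_verts H"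
    using iff by blast
  moreover have "inj_on f (isolated_verts G)"
    using f(1) unfolding embedding_def isolated_verts_def by (auto intro: inj_on_subset)
  ultimately show ?thesis
    by (metis card_image)
qed

definition compl :: "'a graph \<Rightarrow> 'a graph" where
  "compl G = (verts G, \<lambda>x y. x \<in> verts G \<and> y \<in> verts G \<and> x \<noteq> y \<and> \<not> adj G x y)"

lemma verts_compl [simp]: "verts (compl G) = verts G"
  by (simp add: compl_def)

lemma adj_compl [simp]:
  "adj (compl G) x y \<longleftrightarrow> x \<in> verts G \<and> y \<in> verts G \<and> x \<noteq> y \<and> \<not> adj G x y"
  by (simp add: compl_def)

lemma is_graph_compl: "is_graph G \<Longrightarrow> is_graph (compl G)"
  by (auto simp: is_graph_def)

lemma compl_compl: "is_graph G \<Longrightarrow> compl (compl G) = G"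
  by (rule graph_eqI) (auto simp: fun_eq_iff dest: is_graph_adjD)

lemma embedding_compl: "embedding G H f \<Longrightarrow> embedding (compl G) (compl H) f"
  by (auto simp: embedding_def inj_on_def)

lemma isomorphic_compl: "isomorphic G H \<Longrightarrow> isomorphic (compl G) (compl H)"
  unfolding isomorphic_iff_embedding by (auto dest: embedding_compl)

lemma equimorphic_compl: "equimorphic G H \<Longrightarrow> equimorphic (compl G) (compl H)"
  unfolding equimorphic_def embeds_iff_embedding by (auto dest: embedding_compl)

lemma connected_graph_compl:
  assumes G: "is_graph G" and ne: "verts G \<noteq> {}" and disconnected: "\<not> connected_graph G"
  shows "connected_graph (compl G)"
proof -
  let ?R = "(adj G)\<^sup>*\<^sup>*"
  obtain a b where ab: "a \<in> verts G" "b \<in> verts G" "\<not> ?R a b"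
    using ne disconnected unfolding connected_graph_def by blast
  have R_sym: "?R x y \<Longrightarrow> ?R y x" for x y
    using is_graph_symp_reachable[OF G] by (rule sympD)
  have compl_adj: "adj (compl G) x y" if "x \<in> verts G" "y \<in> verts G" "\<not> ?R x y" for x y
    using that by auto
  have "(adj (compl G))\<^sup>*\<^sup>* x y" if x: "x \<in> verts G" and y: "y \<in> verts G" for x y
  proof (cases "?R x y")
    case False
    then show ?thesis using compl_adj x y by blast
  next
    case True
    \<comment> \<open>x and y lie in one component; a vertex z outside it is a common neighbour in the complement\<close>
    obtain z where z: "z \<in> verts G" "\<not> ?R x z"
      using ab by (meson R_sym rtranclp_trans)
    have "\<not> ?R z y"
      using z True by (meson R_sym rtranclp_trans)
    then have "adj (compl G) x z" "adj (compl G) z y"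
      using compl_adj x y z by auto
    then show ?thesis
      by (meson converse_rtranclp_into_rtranclp r_into_rtranclp)
  qed
  then show ?thesis
    using ne unfolding connected_graph_def by simp
qed

lemma embedding_reachable:
  assumes "is_graph G" "embedding G H f" "(adj G)\<^sup>*\<^sup>* x y"
  shows "(adj H)\<^sup>*\<^sup>* (f x) (f y)"
  using assms(3)
proof (induction rule: rtranclp_induct)
  case base
  then show ?case by simp
next
  case (step y z)
  then have "adj H (f y) (f z)"
    using embedding_adj_iff[OF assms(2)] is_graph_adjD[OF assms(1)] by blast
  then show ?case
    by (rule rtranclp.rtrancl_into_rtrancl[OF step.IH])
qed

lemma connected_graph_has_neighbour:
  assumes "is_graph G" "connected_graph G" "infinite (verts G)" "x \<in> verts G"
  shows "\<exists>y\<in>verts G. adj G x y"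
proof -
  obtain y where "y \<in> verts G" "y \<noteq> x"
    using infinite_imp_nonempty[of "verts G - {x}"] assms(3) by auto
  then have "(adj G)\<^sup>*\<^sup>* x y" "x \<noteq> y"
    using assms(2,4) unfolding connected_graph_def by auto
  then show ?thesis
    using is_graph_adjD(2)[OF assms(1)] by (metis converse_rtranclpE)
qed

section \<open>Counting isomorphism classes\<close>

definition all_isomorphic :: "('a graph \<Rightarrow> bool) \<Rightarrow> bool" where
  "all_isomorphic P \<longleftrightarrow>
     (\<forall>G H. is_graph G \<longrightarrow> P G \<longrightarrow> is_graph H \<longrightarrow> P H \<longrightarrow> isomorphic G H)"

definition nonisomorphic_sequence :: "('a graph \<Rightarrow> bool) \<Rightarrow> bool" where
  "nonisomorphic_sequence P \<longleftrightarrow> (\<exists>X :: nat \<Rightarrow> 'a graph.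
     (\<forall>n. is_graph (X n) \<and> P (X n)) \<and> (\<forall>m n. m \<noteq> n \<longrightarrow> \<not> isomorphic (X m) (X n)))"

lemma iso_classes_eq_image:
  fixes P :: "'a graph \<Rightarrow> bool"
  shows "iso_classes P = (\<lambda>G. {H :: 'a graph. isomorphic G H}) ` {G. is_graph G \<and> P G}"
  unfolding iso_classes_def quotient_def by auto

lemma iso_classes_cong:
  assumes "\<And>H. is_graph H \<Longrightarrow> P H \<longleftrightarrow> Q H"
  shows "iso_classes P = iso_classes Q"
proof -
  have "{H. is_graph H \<and> P H} = {H. is_graph H \<and> Q H}"
    using assms by blast
  then show ?thesis
    by (simp add: iso_classes_def)
qed

lemma isomorphic_class_eq:
  fixes G H :: "'a graph"
  shows "isomorphic G H \<Longrightarrow> {K :: 'a graph. isomorphic G K} = {K. isomorphic H K}"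
  by (meson isomorphic_sym isomorphic_trans)

lemma card_iso_classes_eq_1:
  fixes P :: "'a graph \<Rightarrow> bool"
  assumes "all_isomorphic P" "is_graph G" "P G"
  shows "card (iso_classes P) = 1"
proof -
  have "{H :: 'a graph. isomorphic K H} = {H. isomorphic G H}" if "is_graph K" "P K" for K
    using assms that isomorphic_class_eq unfolding all_isomorphic_def by metis
  then have "iso_classes P = (\<lambda>K. {H :: 'a graph. isomorphic G H}) ` {K. is_graph K \<and> P K}"
    unfolding iso_classes_eq_image by (intro image_cong) auto
  also have "\<dots> = {{H. isomorphic G H}}"
    using assms(2,3) by (intro image_constant) simp
  finally show ?thesis
    by simp
qed

lemma all_isomorphic_if_card_iso_classes_eq_1:
  fixes P :: "'a graph \<Rightarrow> bool"
  assumes "card (iso_classes P) = 1"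
  shows "all_isomorphic P"
  unfolding all_isomorphic_def
proof (intro allI impI)
  fix G H
  assume "is_graph G" "P G" "is_graph H" "P H"
  then have "{K. isomorphic G K} \<in> iso_classes P" "{K. isomorphic H K} \<in> iso_classes P"
    unfolding iso_classes_eq_image by blast+
  moreover obtain C where "iso_classes P = {C}"
    using assms card_1_singletonE by blast
  ultimately have "{K :: 'a graph. isomorphic G K} = {K. isomorphic H K}"
    by simp
  then show "isomorphic G H"
    using isomorphic_refl[of H] by (metis mem_Collect_eq)
qed

lemma infinite_iso_classes_iff:
  fixes P :: "'a graph \<Rightarrow> bool"
  shows "infinite (iso_classes P) \<longleftrightarrow> nonisomorphic_sequence P"
proof
  assume "infinite (iso_classes P)"
  then obtain C :: "nat \<Rightarrow> 'a graph set" where C: "inj C" "range C \<subseteq> iso_classes P"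
    unfolding infinite_iff_countable_subset by blast
  have "\<forall>n. \<exists>G. is_graph G \<and> P G \<and> C n = {K. isomorphic G K}"
    using C(2) unfolding iso_classes_eq_image by blast
  then obtain X where X: "\<And>n. is_graph (X n) \<and> P (X n) \<and> C n = {K. isomorphic (X n) K}"
    by metis
  have "\<not> isomorphic (X m) (X n)" if "m \<noteq> n" for m n
  proof
    assume "isomorphic (X m) (X n)"
    then have "C m = C n"
      using X isomorphic_class_eq by metis
    then show False
      using C(1) that by (meson injD)
  qed
  then show "nonisomorphic_sequence P"
    unfolding nonisomorphic_sequence_def using X by blast
next
  assume "nonisomorphic_sequence P"
  then obtain X :: "nat \<Rightarrow> 'a graph" where X: "\<And>n. is_graph (X n) \<and> P (X n)"
    "\<And>m n. m \<noteq> n \<Longrightarrow> \<not> isomorphic (X m) (X n)"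
    unfolding nonisomorphic_sequence_def by blast
  let ?C = "\<lambda>n. {K :: 'a graph. isomorphic (X n) K}"
  have "inj ?C"
  proof (rule injI)
    fix m n
    assume "?C m = ?C n"
    then have "isomorphic (X m) (X n)"
      using isomorphic_refl[of "X n"] by (metis mem_Collect_eq)
    then show "m = n"
      using X(2) by blast
  qed
  then have "infinite (range ?C)"
    using finite_imageD[of ?C UNIV] by auto
  moreover have "range ?C \<subseteq> iso_classes P"
    unfolding iso_classes_eq_image using X(1) by blast
  ultimately show "infinite (iso_classes P)"
    using infinite_super by blast
qed

lemma one_or_infinite_iso_classes_iff:
  assumes "is_graph G" "P G"
  shows "one_or_infinite (iso_classes P) \<longleftrightarrow> all_isomorphic P \<or> nonisomorphic_sequence P"
  unfolding one_or_infinite_def infinite_iso_classes_iff[symmetric]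
  using card_iso_classes_eq_1[of P G] assms all_isomorphic_if_card_iso_classes_eq_1 by blast

section \<open>Finite graphs and complements\<close>

lemma equimorphic_sym: "equimorphic G H \<Longrightarrow> equimorphic H G"
  by (simp add: equimorphic_def)

lemma equimorphic_finite_imp_isomorphic:
  assumes "finite (verts G)" "equimorphic G H"
  shows "isomorphic G H"
proof -
  obtain f g where f: "embedding G H f" and g: "embedding H G g"
    using assms(2) unfolding equimorphic_def embeds_iff_embedding by blast
  have "finite (verts H)" "card (verts H) \<le> card (verts G)"
    using g assms(1) unfolding embedding_def by (auto intro: inj_on_finite card_inj_on_le)
  moreover have "card (f ` verts G) = card (verts G)" "f ` verts G \<subseteq> verts H"
    using f unfolding embedding_def by (auto intro: card_image)
  ultimately have "f ` verts G = verts H"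
    by (metis card_seteq)
  then show ?thesis
    using f unfolding isomorphic_iff_embedding by blast
qed

lemma all_isomorphic_equimorphic_finite:
  fixes G :: "'a graph"
  assumes "finite (verts G)"
  shows "all_isomorphic (\<lambda>H :: 'b graph. equimorphic H G)"
  unfolding all_isomorphic_def
  using equimorphic_finite_imp_isomorphic[OF assms] equimorphic_sym isomorphic_sym isomorphic_trans
  by metis

lemma one_or_infinite_equimorphic_finite:
  fixes G :: "'a graph"
  assumes "is_graph G" "finite (verts G)"
  shows "one_or_infinite (iso_classes (\<lambda>H :: 'a graph. equimorphic H G))"
  using one_or_infinite_iso_classes_iff[of G "\<lambda>H. equimorphic H G"] assms
    all_isomorphic_equimorphic_finite equimorphic_refl by blast

lemma all_isomorphic_compl:
  assumes "all_isomorphic Q" "\<And>H. is_graph H \<Longrightarrow> P H \<Longrightarrow> Q (compl H)"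
  shows "all_isomorphic P"
  unfolding all_isomorphic_def
proof (intro allI impI)
  fix G H
  assume "is_graph G" "P G" "is_graph H" "P H"
  then have "isomorphic (compl G) (compl H)"
    using assms is_graph_compl unfolding all_isomorphic_def by blast
  then have "isomorphic (compl (compl G)) (compl (compl H))"
    by (rule isomorphic_compl)
  then show "isomorphic G H"
    by (simp only: compl_compl[OF \<open>is_graph G\<close>] compl_compl[OF \<open>is_graph H\<close>])
qed

lemma nonisomorphic_sequence_compl:
  fixes P Q :: "'a graph \<Rightarrow> bool"
  assumes "nonisomorphic_sequence Q" "\<And>H. is_graph H \<Longrightarrow> Q H \<Longrightarrow> P (compl H)"
  shows "nonisomorphic_sequence P"
proof -
  obtain X :: "nat \<Rightarrow> 'a graph" where X: "\<And>n. is_graph (X n) \<and> Q (X n)"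
    "\<And>m n. m \<noteq> n \<Longrightarrow> \<not> isomorphic (X m) (X n)"
    using assms(1) unfolding nonisomorphic_sequence_def by blast
  have X_graph: "is_graph (X n)" for n
    using X(1) by blast
  have noniso: "\<not> isomorphic (compl (X m)) (compl (X n))" if "m \<noteq> n" for m n
  proof
    assume "isomorphic (compl (X m)) (compl (X n))"
    then have "isomorphic (compl (compl (X m))) (compl (compl (X n)))"
      by (rule isomorphic_compl)
    then have "isomorphic (X m) (X n)"
      by (simp only: compl_compl[OF X_graph])
    then show False
      using X(2) that by blast
  qed
  show ?thesis
    unfolding nonisomorphic_sequence_def
  proof (rule exI[where x = "\<lambda>n. compl (X n)"], intro conjI allI impI)
    show "is_graph (compl (X n))" "P (compl (X n))" for n
      using X(1) assms(2) is_graph_compl by blast+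
  qed (rule noniso)
qed

lemma one_or_infinite_equimorphic_compl:
  fixes G :: "'a graph"
  assumes G: "is_graph G"
    and compl_G: "one_or_infinite (iso_classes (\<lambda>H :: 'a graph. equimorphic H (compl G)))"
  shows "one_or_infinite (iso_classes (\<lambda>H :: 'a graph. equimorphic H G))"
proof -
  let ?P = "\<lambda>H :: 'a graph. equimorphic H G"
  let ?Q = "\<lambda>H :: 'a graph. equimorphic H (compl G)"
  have "all_isomorphic ?Q \<or> nonisomorphic_sequence ?Q"
    using compl_G one_or_infinite_iso_classes_iff[of "compl G" ?Q]
    by (simp add: is_graph_compl[OF G] equimorphic_refl)
  moreover have "?Q (compl H)" if "?P H" for H
    using that by (rule equimorphic_compl)
  moreover have "?P (compl H)" if "?Q H" for H
    using equimorphic_compl[OF that] by (simp only: compl_compl[OF G])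
  ultimately have "all_isomorphic ?P \<or> nonisomorphic_sequence ?P"
    using all_isomorphic_compl[of ?Q ?P] nonisomorphic_sequence_compl[of ?Q ?P] by blast
  then show ?thesis
    using one_or_infinite_iso_classes_iff[of G ?P] by (simp add: G equimorphic_refl)
qed

section \<open>Orbits of a self-embedding\<close>

context
  fixes H :: "'a graph" and \<phi> :: "'a \<Rightarrow> 'a" and D :: "'a set" and v :: 'a
  assumes H: "is_graph H" and \<phi>: "embedding H H \<phi>"
    and \<phi>_into_D: "\<phi> ` verts H \<subseteq> D" and D: "D \<subseteq> verts H"
    and D_neighbour: "\<And>d. d \<in> D \<Longrightarrow> \<exists>e\<in>D. adj H d e"
    and v: "v \<in> verts H" and v_D: "\<And>d. d \<in> D \<Longrightarrow> \<not> adj H v d"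
begin

lemma funpow_Suc_in_D: "x \<in> verts H \<Longrightarrow> (\<phi> ^^ Suc j) x \<in> D"
  using embedding_in_verts[OF embedding_funpow[OF \<phi>]] \<phi>_into_D by auto

lemma orbit_not_adj:
  assumes "j < i" "x \<in> verts H"
  shows "\<not> adj H ((\<phi> ^^ j) v) ((\<phi> ^^ i) x)"
proof -
  obtain l where i: "i = j + Suc l"
    using assms(1) less_iff_Suc_add by auto
  define d where "d = (\<phi> ^^ Suc l) x"
  have "d \<in> D"
    unfolding d_def using assms(2) by (rule funpow_Suc_in_D)
  moreover have "(\<phi> ^^ i) x = (\<phi> ^^ j) d"
    unfolding i d_def funpow_add by simp
  ultimately show ?thesis
    using v_D v D embedding_adj_iff[OF embedding_funpow[OF \<phi>]] by auto
qed

lemma orbit_not_adj_orbit: "\<not> adj H ((\<phi> ^^ j) v) ((\<phi> ^^ i) v)"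
proof (cases i j rule: linorder_cases)
  case less
  then show ?thesis
    using orbit_not_adj[OF less v] is_graph_adjD(3)[OF H] by blast
next
  case equal
  then show ?thesis
    using is_graph_adjD(4)[OF H] by blast
next
  case greater
  then show ?thesis
    using orbit_not_adj[OF greater v] by blast
qed

lemma inj_orbit: "inj (\<lambda>j. (\<phi> ^^ j) v)"
proof -
  have "v \<notin> D"
    using D_neighbour v_D by blast
  have neq: "(\<phi> ^^ j) v \<noteq> (\<phi> ^^ i) v" if "j < i" for i j
  proof
    obtain l where i: "i = j + Suc l"
      using \<open>j < i\<close> less_iff_Suc_add by auto
    assume "(\<phi> ^^ j) v = (\<phi> ^^ i) v"
    then have "(\<phi> ^^ j) v = (\<phi> ^^ j) ((\<phi> ^^ Suc l) v)"
      unfolding i funpow_add by simp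
    then have "v = (\<phi> ^^ Suc l) v"
      using embedding_eq_iff[OF embedding_funpow[OF \<phi>]] v funpow_Suc_in_D D by blast
    then show False
      using \<open>v \<notin> D\<close> funpow_Suc_in_D[OF v, of l] by argo
  qed
  show ?thesis
  proof (rule injI)
    fix i j
    assume "(\<phi> ^^ i) v = (\<phi> ^^ j) v"
    then show "i = j"
      using neq[of i j] neq[of j i] by (cases i j rule: linorder_cases) auto
  qed
qed

lemma isolated_verts_orbit_induced:
  "isolated_verts (induced H ((\<phi> ^^ k) ` D \<union> (\<lambda>j. (\<phi> ^^ j) v) ` {..<k})) =
     (\<lambda>j. (\<phi> ^^ j) v) ` {..<k}"
  (is "isolated_verts (induced H ?V) = ?O")
proof
  show "isolated_verts (induced H ?V) \<subseteq> ?O"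
  proof
    fix x
    assume x: "x \<in> isolated_verts (induced H ?V)"
    show "x \<in> ?O"
    proof (rule ccontr)
      assume "x \<notin> ?O"
      then obtain d where d: "d \<in> D" "x = (\<phi> ^^ k) d"
        using x by (auto simp: isolated_verts_def)
      obtain e where e: "e \<in> D" "adj H d e"
        using D_neighbour[OF d(1)] by blast
      moreover have "d \<in> verts H" "e \<in> verts H"
        using d(1) e(1) D by auto
      ultimately have "adj H x ((\<phi> ^^ k) e)" "(\<phi> ^^ k) e \<in> ?V"
        using d(2) embedding_adj_iff[OF embedding_funpow[OF \<phi>]] by auto
      then show False
        using x by (auto simp: isolated_verts_def)
    qed
  qed
next
  show "?O \<subseteq> isolated_verts (induced H ?V)"
  proof
    fix x
    assume "x \<in> ?O"
    then obtain j where j: "j < k" "x = (\<phi> ^^ j) v"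
      by blast
    have "\<not> adj H x y" if y: "y \<in> ?V" for y
    proof (cases "y \<in> ?O")
      case True
      then show ?thesis
        using orbit_not_adj_orbit j(2) by blast
    next
      case False
      then obtain d where "d \<in> D" "y = (\<phi> ^^ k) d"
        using y by blast
      then show ?thesis
        using orbit_not_adj[OF j(1)] j(2) D by blast
    qed
    then show "x \<in> isolated_verts (induced H ?V)"
      using j by (auto simp: isolated_verts_def)
  qed
qed

lemma card_isolated_verts_orbit_induced:
  "card (isolated_verts (induced H ((\<phi> ^^ k) ` D \<union> (\<lambda>j. (\<phi> ^^ j) v) ` {..<k}))) = k"
  using isolated_verts_orbit_induced inj_orbit by (simp add: card_image inj_on_subset)

end

section \<open>Connected graphs with a disconnected equimorphic graph\<close>

lemma equimorphic_induced_between: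
  assumes "embedding G H f" "embedding H G g" "f ` verts G \<subseteq> S" "S \<subseteq> verts H"
  shows "equimorphic (induced H S) G"
proof -
  have "embedding (induced H S) G (g \<circ> id)"
    using embedding_induced[OF assms(4)] assms(2) by (rule embedding_comp)
  moreover have "embedding G (induced H S) f"
    using assms(1,3) by (rule embedding_into_induced)
  ultimately show ?thesis
    unfolding equimorphic_def embeds_iff_embedding by blast
qed

lemma vertex_apart_from_connected_image:
  assumes G: "is_graph G" "connected_graph G" and H: "is_graph H" "\<not> connected_graph H"
    and f: "embedding G H f"
  obtains v where "v \<in> verts H" "\<And>x. x \<in> verts G \<Longrightarrow> \<not> adj H v (f x)"
proof -
  let ?R = "(adj H)\<^sup>*\<^sup>*"
  obtain x0 where x0: "x0 \<in> verts G"
    using G(2) unfolding connected_graph_def by blast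
  have reach: "?R (f x0) (f x)" if "x \<in> verts G" for x
  proof -
    have "(adj G)\<^sup>*\<^sup>* x0 x"
      using G(2) x0 that unfolding connected_graph_def by blast
    then show ?thesis
      by (rule embedding_reachable[OF G(1) f])
  qed
  have "verts H \<noteq> {}"
    using embedding_in_verts[OF f x0] by blast
  then obtain a b where "a \<in> verts H" "b \<in> verts H" "\<not> ?R a b"
    using H(2) unfolding connected_graph_def by blast
  then obtain v where v: "v \<in> verts H" "\<not> ?R (f x0) v"
    using sympD[OF is_graph_symp_reachable[OF H(1)]] by (meson rtranclp_trans)
  have "\<not> adj H v (f x)" if "x \<in> verts G" for x
  proof
    assume "adj H v (f x)"
    then have "?R (f x) v"
      using is_graph_adjD(3)[OF H(1)] by blast
    then show False
      using reach[OF that] v(2) by (meson rtranclp_trans)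
  qed
  then show ?thesis
    using that v(1) by blast
qed

lemma nonisomorphic_sequence_if_disconnected_equimorphic:
  fixes G H :: "'a graph"
  assumes G: "is_graph G" "connected_graph G" "infinite (verts G)"
    and H: "is_graph H" "equimorphic H G" "\<not> connected_graph H"
  shows "nonisomorphic_sequence (\<lambda>K :: 'a graph. equimorphic K G)"
proof -
  obtain \<psi> \<chi> where \<psi>: "embedding G H \<psi>" and \<chi>: "embedding H G \<chi>"
    using H(2) unfolding equimorphic_def embeds_iff_embedding by blast
  obtain v where v: "v \<in> verts H" "\<And>x. x \<in> verts G \<Longrightarrow> \<not> adj H v (\<psi> x)"
    using vertex_apart_from_connected_image[OF G(1,2) H(1,3) \<psi>] by blast
  define \<phi> where "\<phi> = \<psi> \<circ> \<chi>"
  define D where "D = \<psi> ` verts G"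
  have \<phi>: "embedding H H \<phi>"
    unfolding \<phi>_def using \<chi> \<psi> by (rule embedding_comp)
  have \<phi>_into_D: "\<phi> ` verts H \<subseteq> D" and D: "D \<subseteq> verts H"
    using \<chi> \<psi> unfolding \<phi>_def D_def embedding_def by auto
  have D_neighbour: "\<exists>e\<in>D. adj H d e" if "d \<in> D" for d
    using that connected_graph_has_neighbour[OF G] embedding_adj_iff[OF \<psi>]
    unfolding D_def by blast
  have v_D: "\<not> adj H v d" if "d \<in> D" for d
    using that v(2) unfolding D_def by blast
  define X where "X k = induced H ((\<phi> ^^ k) ` D \<union> (\<lambda>j. (\<phi> ^^ j) v) ` {..<k})" for k
  have X_equimorphic: "equimorphic (X k) G" for k
  proof -
    have "embedding G H ((\<phi> ^^ k) \<circ> \<psi>)"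
      using \<psi> embedding_funpow[OF \<phi>] by (rule embedding_comp)
    moreover have "(\<phi> ^^ k) ` D \<union> (\<lambda>j. (\<phi> ^^ j) v) ` {..<k} \<subseteq> verts H"
      using embedding_in_verts[OF embedding_funpow[OF \<phi>]] D v(1) by blast
    ultimately show ?thesis
      unfolding X_def using \<chi> by (intro equimorphic_induced_between) (auto simp: D_def)
  qed
  have X_isolated: "card (isolated_verts (X k)) = k" for k
    unfolding X_def
    by (rule card_isolated_verts_orbit_induced[OF H(1) \<phi> \<phi>_into_D D D_neighbour v(1) v_D])
  show ?thesis
    unfolding nonisomorphic_sequence_def
  proof (rule exI[where x = X], intro conjI allI impI notI)
    show "is_graph (X k)" for k
      unfolding X_def using H(1) by (rule is_graph_induced)
    show "equimorphic (X k) G" for k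
      by (rule X_equimorphic)
    show False if "m \<noteq> n" "isomorphic (X m) (X n)" for m n
      using that isomorphic_card_isolated_verts X_isolated by metis
  qed
qed

lemma one_or_infinite_equimorphic_connected:
  fixes G :: "'a graph"
  assumes hyp: "one_or_infinite (iso_classes (\<lambda>H :: 'a graph. connected_graph H \<and> equimorphic H G))"
    and G: "is_graph G" "connected_graph G" "infinite (verts G)"
  shows "one_or_infinite (iso_classes (\<lambda>H :: 'a graph. equimorphic H G))"
proof (cases "\<exists>H :: 'a graph. is_graph H \<and> equimorphic H G \<and> \<not> connected_graph H")
  case True
  then have "nonisomorphic_sequence (\<lambda>H :: 'a graph. equimorphic H G)"
    using nonisomorphic_sequence_if_disconnected_equimorphic[OF G] by blast
  then show ?thesis
    using one_or_infinite_iso_classes_iff[of G "\<lambda>H. equimorphic H G"] G(1) equimorphic_refl by blast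
next
  case False
  then have "iso_classes (\<lambda>H :: 'a graph. equimorphic H G) =
      iso_classes (\<lambda>H. connected_graph H \<and> equimorphic H G)"
    by (intro iso_classes_cong) blast
  then show ?thesis
    using hyp by simp
qed

theorem proposition1p5:
  fixes G :: "'a graph"
  assumes hyp: "\<And>K :: 'a graph. is_graph K \<Longrightarrow> connected_graph K \<Longrightarrow>
      one_or_infinite (iso_classes (\<lambda>H :: 'a graph. connected_graph H \<and> equimorphic H K))"
    and "is_graph G"
  shows "one_or_infinite (iso_classes (\<lambda>H :: 'a graph. equimorphic H G))"
proof (cases "finite (verts G)")
  case True
  then show ?thesis
    using one_or_infinite_equimorphic_finite \<open>is_graph G\<close> by blast
next
  case infinite: False
  show ?thesis
  proof (cases "connected_graph G")
    case True
    then show ?thesis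
      using one_or_infinite_equimorphic_connected hyp \<open>is_graph G\<close> infinite by blast
  next
    case False
    then have "connected_graph (compl G)"
      by (rule connected_graph_compl[OF \<open>is_graph G\<close> infinite_imp_nonempty[OF infinite]])
    moreover have "is_graph (compl G)" "infinite (verts (compl G))"
      using \<open>is_graph G\<close> infinite by (simp_all add: is_graph_compl)
    ultimately have "one_or_infinite (iso_classes (\<lambda>H :: 'a graph. equimorphic H (compl G)))"
      using one_or_infinite_equimorphic_connected hyp by blast
    then show ?thesis
      using one_or_infinite_equimorphic_compl \<open>is_graph G\<close> by blast
  qed
qed

end
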